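(* Let $P$ be as below. There are $C>0$ and $\delta>0$ such that for $\operatorname{Im}\omega\ge C$, the $L^2$ resolvent satisfies $\mathcal R^{L^2}(\omega)=(P-\omega)^{-1}:\mathscr A_\delta\to\mathscr A_\delta$.
   Context: $\mathbb T^n=\mathbb R^n/2\pi\mathbb Z^n$. $P$ is self-adjoint on $L^2(\mathbb T^n)$ and given by $Pu(x)=\lim_{\epsilon\to0+}\lim_{\delta\to0+}(2\pi)^{-n}\int e^{i\langle x-y,\xi\rangle-\epsilon|\xi|^2-\delta|x-y|^2}p(x,\xi)u(y)dyd\xi$, where $p$ is $2\pi\mathbb Z^n$-periodic in $x$ and extends holomorphically with $|p(z,\zeta)|\le C\langle\operatorname{Re}\zeta\rangle^m$, $m=0$, for $|\operatorname{Im}z|\le a$, $|\operatorname{Im}\zeta|\le b\langle\operatorname{Re}\zeta\rangle$. $\mathscr A_\delta=\{u\in L^2(\mathbb T^n):\|u\|^2_{\mathscr A_\delta}=\sum_{k\in\mathbb Z^n}|\hat u(k)|^2e^{4|k|\delta}<\infty\}$. *)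

theory Defs
  imports "HOL-Analysis.Analysis"
begin

text \<open>The torus is R^n / 2 pi Z^n, n = CARD('n). Functions in L^2(T^n) are represented by their Fourier
  coefficients (Plancherel), i.e. by square-summable families int^'n => complex.\<close>

definition lnorm :: "int ^ 'n::finite \<Rightarrow> real" where
  "lnorm k = sqrt (\<Sum>i\<in>UNIV. (real_of_int (k $ i))\<^sup>2)"

definition vRe :: "complex ^ 'n::finite \<Rightarrow> real ^ 'n" where
  "vRe z = (\<chi> i. Re (z $ i))"

definition vIm :: "complex ^ 'n::finite \<Rightarrow> real ^ 'n" where
  "vIm z = (\<chi> i. Im (z $ i))"

definition cvec :: "real ^ 'n::finite \<Rightarrow> complex ^ 'n" where
  "cvec x = (\<chi> i. complex_of_real (x $ i))"

definition ivec :: "int ^ 'n::finite \<Rightarrow> real ^ 'n" where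
  "ivec k = (\<chi> i. real_of_int (k $ i))"

definition jbr :: "real ^ 'n::finite \<Rightarrow> real" where
  "jbr \<xi> = sqrt (1 + (norm \<xi>)\<^sup>2)"

definition symb_region :: "real \<Rightarrow> real \<Rightarrow> ((complex ^ 'n) \<times> (complex ^ 'n::finite)) set" where
  "symb_region a b = {(z, \<zeta>). norm (vIm z) \<le> a \<and> norm (vIm \<zeta>) \<le> b * jbr (vRe \<zeta>)}"

text \<open>Holomorphy in several complex variables: complex (Frechet) differentiability,
  i.e. real differentiability with a complex-linear derivative, at every point of U.\<close>
definition holo2 :: "((complex ^ 'n::finite) \<Rightarrow> (complex ^ 'n) \<Rightarrow> complex) \<Rightarrow>
    ((complex ^ 'n) \<times> (complex ^ 'n)) set \<Rightarrow> bool" where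
  "holo2 p U \<longleftrightarrow> open U \<and> (\<forall>w\<in>U. \<exists>D. ((\<lambda>(z, \<zeta>). p z \<zeta>) has_derivative D) (at w) \<and>
      (\<forall>h1 h2. D (\<i> *s h1, \<i> *s h2) = \<i> * D (h1, h2)))"

definition tcube :: "(real ^ 'n::finite) set" where
  "tcube = cbox 0 (\<chi> i. 2 * pi)"

definition symc :: "((complex ^ 'n::finite) \<Rightarrow> (complex ^ 'n) \<Rightarrow> complex) \<Rightarrow> int ^ 'n \<Rightarrow> int ^ 'n \<Rightarrow> complex" where
  "symc p m j = complex_of_real (1 / (2 * pi) ^ CARD('n)) *
     integral tcube (\<lambda>x. exp (- \<i> * complex_of_real (ivec m \<bullet> x)) * p (cvec x) (cvec (ivec j)))"

text \<open>Action of P on Fourier coefficients: (Pu)^(k) = sum_j p^(k - j, j) u^(j).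
  For 2 pi Z^n periodic u this is what the regularized oscillatory integral
  (2 pi)^(-n) int e^(i<x-y,xi>) p(x,xi) u(y) dy dxi gives.\<close>
definition opP :: "((complex ^ 'n::finite) \<Rightarrow> (complex ^ 'n) \<Rightarrow> complex) \<Rightarrow> (int ^ 'n \<Rightarrow> complex) \<Rightarrow> int ^ 'n \<Rightarrow> complex" where
  "opP p u k = (\<Sum>\<^sub>\<infinity>j. symc p (k - j) j * u j)"

definition L2T :: "(int ^ 'n::finite \<Rightarrow> complex) \<Rightarrow> bool" where
  "L2T u \<longleftrightarrow> (\<lambda>k. (cmod (u k))\<^sup>2) summable_on UNIV"

definition Adelta :: "real \<Rightarrow> (int ^ 'n::finite \<Rightarrow> complex) \<Rightarrow> bool" where
  "Adelta \<delta> u \<longleftrightarrow> L2T u \<and> (\<lambda>k. (cmod (u k))\<^sup>2 * exp (4 * lnorm k * \<delta>)) summable_on UNIV"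

text \<open>Self-adjointness of P on L^2(T^n): <Pu, v> = <u, Pv> (Parseval).\<close>
definition selfadjP :: "((complex ^ 'n::finite) \<Rightarrow> (complex ^ 'n) \<Rightarrow> complex) \<Rightarrow> bool" where
  "selfadjP p \<longleftrightarrow> (\<forall>u v. L2T u \<and> L2T v \<longrightarrow> L2T (opP p u) \<and>
      (\<Sum>\<^sub>\<infinity>k. opP p u k * cnj (v k)) = (\<Sum>\<^sub>\<infinity>k. u k * cnj (opP p v k)))"

end

theory Submission
  imports Defs "HOL-Complex_Analysis.Complex_Analysis"
begin

text \<open>In Fourier coefficients \<open>P\<close> acts by the matrix \<open>A k j = symc p (k - j) j\<close>. Shifting the
  \<open>x\<close>-integration that defines \<open>symc\<close> into the strip of analyticity gives
  \<open>\<bar>symc p m j\<bar> \<le> C\<^sub>0 exp (- 2 c \<bar>m\<bar>\<^sub>1)\<close> with \<open>c = a / (4 n)\<close>. Hence \<open>A\<close> and its conjugate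
  \<open>e\<^bsup>c\<bar>k\<bar>\<^esup> A k j e\<^bsup>-c\<bar>j\<bar>\<^esup>\<close> are both dominated by the summable convolution kernel
  \<open>C\<^sub>0 exp (- c \<bar>m\<bar>\<^sub>1)\<close> of mass \<open>M\<close>, so by Young's inequality both have norm at most \<open>M\<close> on
  \<open>\<ell>\<^sup>2\<close>. For \<open>\<bar>\<omega>\<bar> > M\<close>, in particular for \<open>Im \<omega> \<ge> M + 1\<close>, the equation \<open>(P - \<omega>) u = f\<close>
  is solved by a contraction argument, and solving the conjugated equation shows that \<open>u\<close>
  lies in \<open>Adelta \<delta>\<close>, \<open>\<delta> = c / 2\<close>, whenever \<open>f\<close> does.\<close>

section \<open>Square-summable families\<close>

definition sq_summable :: "('i \<Rightarrow> complex) \<Rightarrow> bool" where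
  "sq_summable x \<longleftrightarrow> (\<lambda>k. (cmod (x k))\<^sup>2) summable_on UNIV"

definition l2_norm :: "('i \<Rightarrow> complex) \<Rightarrow> real" where
  "l2_norm x = sqrt (\<Sum>\<^sub>\<infinity>k. (cmod (x k))\<^sup>2)"

lemma l2_norm_nonneg: "l2_norm x \<ge> 0"
  unfolding l2_norm_def by (simp add: infsum_nonneg)

lemma L2_set_le_l2_norm:
  assumes "sq_summable x" "finite F"
  shows "L2_set (\<lambda>k. cmod (x k)) F \<le> l2_norm x"
  unfolding L2_set_def l2_norm_def
  using assms by (auto simp: sq_summable_def intro!: finite_sum_le_infsum)

lemma norm_le_l2_norm: "sq_summable x \<Longrightarrow> cmod (x k) \<le> l2_norm x"
  using L2_set_le_l2_norm[of x "{k}"] by simp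

lemma sq_summable_if_L2_set_bounded:
  assumes "\<And>F. finite F \<Longrightarrow> L2_set (\<lambda>k. cmod (x k)) F \<le> B"
  shows "sq_summable x" "l2_norm x \<le> B"
proof -
  have B: "0 \<le> B" using assms[of "{}"] by simp
  have sums: "(\<Sum>k\<in>F. (cmod (x k))\<^sup>2) \<le> B\<^sup>2" if "finite F" for F
    using assms[OF that] unfolding L2_set_def by (rule sqrt_le_D)
  show "sq_summable x" unfolding sq_summable_def
    using sums by (intro nonneg_bdd_above_summable_on bdd_aboveI2) auto
  then have "(\<Sum>\<^sub>\<infinity>k. (cmod (x k))\<^sup>2) \<le> B\<^sup>2"
    by (intro infsum_le_finite_sums sums) (auto simp: sq_summable_def)
  then show "l2_norm x \<le> B"
    unfolding l2_norm_def using B by (rule real_le_lsqrt[rotated])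
qed

lemma l2_norm_le_zero_imp_zero:
  assumes "sq_summable x" "l2_norm x \<le> 0"
  shows "x k = 0"
  using norm_le_l2_norm[OF assms(1), of k] assms(2) by (metis norm_le_zero_iff order_trans)

lemma
  assumes x: "sq_summable x" and y: "sq_summable y"
  shows sq_summable_add: "sq_summable (\<lambda>k. x k + y k)"
    and l2_norm_triangle: "l2_norm (\<lambda>k. x k + y k) \<le> l2_norm x + l2_norm y"
proof -
  have "L2_set (\<lambda>k. cmod (x k + y k)) F \<le> l2_norm x + l2_norm y" if F: "finite F" for F
  proof -
    have "L2_set (\<lambda>k. cmod (x k + y k)) F \<le> L2_set (\<lambda>k. cmod (x k) + cmod (y k)) F"
      by (rule L2_set_mono) (auto intro: norm_triangle_ineq)
    also have "\<dots> \<le> L2_set (\<lambda>k. cmod (x k)) F + L2_set (\<lambda>k. cmod (y k)) F"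
      by (rule L2_set_triangle_ineq)
    also have "\<dots> \<le> l2_norm x + l2_norm y"
      using F x y by (intro add_mono L2_set_le_l2_norm)
    finally show ?thesis .
  qed
  then show "sq_summable (\<lambda>k. x k + y k)" "l2_norm (\<lambda>k. x k + y k) \<le> l2_norm x + l2_norm y"
    by (fact sq_summable_if_L2_set_bounded)+
qed

lemma
  assumes "sq_summable x"
  shows sq_summable_cmult: "sq_summable (\<lambda>k. c * x k)"
    and l2_norm_cmult: "l2_norm (\<lambda>k. c * x k) = cmod c * l2_norm x"
proof -
  have sq: "(\<lambda>k. (cmod (c * x k))\<^sup>2) = (\<lambda>k. (cmod c)\<^sup>2 * (cmod (x k))\<^sup>2)"
    by (simp add: norm_mult power_mult_distrib)
  show "sq_summable (\<lambda>k. c * x k)"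
    using assms unfolding sq_summable_def sq by (rule summable_on_cmult_right)
  show "l2_norm (\<lambda>k. c * x k) = cmod c * l2_norm x"
    unfolding l2_norm_def sq infsum_cmult_right' by (simp add: real_sqrt_mult)
qed

lemma sq_summable_diff: "sq_summable x \<Longrightarrow> sq_summable y \<Longrightarrow> sq_summable (\<lambda>k. x k - y k)"
  using sq_summable_add[of x "\<lambda>k. -1 * y k"] sq_summable_cmult[of y "-1"] by simp

lemma power2_l2_norm: "(l2_norm x)\<^sup>2 = (\<Sum>\<^sub>\<infinity>k. (cmod (x k))\<^sup>2)"
  unfolding l2_norm_def by (simp add: infsum_nonneg)

lemma sq_summable_mono:
  assumes "sq_summable y" "\<And>k. cmod (x k) \<le> cmod (y k)"
  shows "sq_summable x"
  using assms(1) unfolding sq_summable_def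
  by (rule summable_on_comparison_test) (auto intro: power_mono assms(2))

lemma l2_norm_tendsto_imp_pointwise:
  assumes "\<And>N. sq_summable (\<lambda>k. y k - x N k)" "(\<lambda>N. l2_norm (\<lambda>k. y k - x N k)) \<longlonglongrightarrow> 0"
  shows "(\<lambda>N. x N k) \<longlonglongrightarrow> y k"
proof (rule LIM_zero_cancel, rule Lim_null_comparison[OF always_eventually assms(2)], rule allI)
  show "norm (x N k - y k) \<le> l2_norm (\<lambda>k. y k - x N k)" for N
    using norm_le_l2_norm[OF assms(1)[of N], of k] by (simp add: norm_minus_commute)
qed

lemma sq_summable_Cauchy_limit:
  fixes x :: "nat \<Rightarrow> 'i \<Rightarrow> complex"
  assumes x: "\<And>N. sq_summable (x N)"
    and tail: "\<And>N d. l2_norm (\<lambda>k. x (N + d) k - x N k) \<le> \<epsilon> N" and \<epsilon>: "\<epsilon> \<longlonglongrightarrow> 0"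
  obtains y where "sq_summable y" "(\<lambda>N. l2_norm (\<lambda>k. y k - x N k)) \<longlonglongrightarrow> 0"
proof -
  have Cauchy: "Cauchy (\<lambda>N. x N k)" for k
  proof (rule metric_CauchyI)
    fix e :: real assume "e > 0"
    then obtain M where M: "\<And>N. N \<ge> M \<Longrightarrow> \<epsilon> N < e / 2"
      using order_tendstoD(2)[OF \<epsilon>, of "e / 2"] by (auto simp: eventually_sequentially)
    have close_M: "dist (x m k) (x M k) < e / 2" if m: "m \<ge> M" for m
    proof -
      obtain d where "m = M + d" using le_Suc_ex[OF m] by blast
      then show ?thesis
        using norm_le_l2_norm[OF sq_summable_diff[OF x[of m] x[of M]], of k] tail[of M d] M[of M]
        by (simp add: dist_norm)
    qed
    show "\<exists>M. \<forall>m\<ge>M. \<forall>n\<ge>M. dist (x m k) (x n k) < e"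
    proof (intro exI allI impI)
      fix m n assume "m \<ge> M" "n \<ge> M"
      then show "dist (x m k) (x n k) < e"
        by (rule dist_triangle_half_l[OF close_M close_M])
    qed
  qed
  define y where "y k = lim (\<lambda>N. x N k)" for k
  have lim: "(\<lambda>N. x N k) \<longlonglongrightarrow> y k" for k
    unfolding y_def using Cauchy[of k] by (simp add: Cauchy_convergent_iff convergent_LIMSEQ_iff)
  have close: "sq_summable (\<lambda>k. y k - x N k)" "l2_norm (\<lambda>k. y k - x N k) \<le> \<epsilon> N" for N
  proof -
    have "L2_set (\<lambda>k. cmod (y k - x N k)) F \<le> \<epsilon> N" if F: "finite F" for F
    proof (rule LIMSEQ_le_const2)
      show "(\<lambda>d. L2_set (\<lambda>k. cmod (x (d + N) k - x N k)) F) \<longlonglongrightarrow> L2_set (\<lambda>k. cmod (y k - x N k)) F"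
        unfolding L2_set_def
        by (intro tendsto_intros LIMSEQ_ignore_initial_segment lim)
      show "\<exists>M. \<forall>d\<ge>M. L2_set (\<lambda>k. cmod (x (d + N) k - x N k)) F \<le> \<epsilon> N"
        using L2_set_le_l2_norm[OF sq_summable_diff[OF x x] F] tail
        by (metis add.commute order_trans)
    qed
    then show "sq_summable (\<lambda>k. y k - x N k)" "l2_norm (\<lambda>k. y k - x N k) \<le> \<epsilon> N"
      by (fact sq_summable_if_L2_set_bounded)+
  qed
  show thesis
  proof
    show "sq_summable y"
      using sq_summable_add[OF close(1)[of 0] x[of 0]] by simp
    show "(\<lambda>N. l2_norm (\<lambda>k. y k - x N k)) \<longlonglongrightarrow> 0"
      by (rule tendsto_sandwich[of "\<lambda>_. 0" _ _ \<epsilon>])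
         (simp_all add: l2_norm_nonneg close(2) \<epsilon>)
  qed
qed

lemma l2_norm_tail_le_geometric:
  fixes x :: "nat \<Rightarrow> 'i \<Rightarrow> complex"
  assumes x: "\<And>N. sq_summable (x N)"
    and increments: "\<And>N. l2_norm (\<lambda>k. x (Suc N) k - x N k) \<le> C * r ^ N"
    and r: "0 \<le> r" "r < 1"
  shows "l2_norm (\<lambda>k. x (N + d) k - x N k) \<le> C * r ^ N / (1 - r)"
proof -
  have C: "C \<ge> 0" using increments[of 0] l2_norm_nonneg[of "\<lambda>k. x 1 k - x 0 k"] by simp
  have "l2_norm (\<lambda>k. x (N + d) k - x N k) \<le> C * r ^ N * (1 - r ^ d) / (1 - r)"
  proof (induction d)
    case 0 then show ?case by (simp add: l2_norm_def)
  next
    case (Suc d)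
    have "l2_norm (\<lambda>k. x (N + Suc d) k - x N k)
        \<le> l2_norm (\<lambda>k. x (Suc (N + d)) k - x (N + d) k) + l2_norm (\<lambda>k. x (N + d) k - x N k)"
      using l2_norm_triangle[OF sq_summable_diff[OF x x] sq_summable_diff[OF x x],
          of "Suc (N + d)" "N + d" "N + d" N]
      by simp
    also have "\<dots> \<le> C * r ^ (N + d) + C * r ^ N * (1 - r ^ d) / (1 - r)"
      using increments[of "N + d"] Suc.IH by linarith
    also have "\<dots> = C * r ^ N * (1 - r ^ Suc d) / (1 - r)"
      using r by (simp add: field_simps power_add)
    finally show ?case .
  qed
  also have "\<dots> \<le> C * r ^ N / (1 - r)"
    using r C by (intro divide_right_mono mult_left_le) auto
  finally show ?thesis .
qed

lemma sq_summable_geometric_limit: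
  fixes x :: "nat \<Rightarrow> 'i \<Rightarrow> complex"
  assumes x: "\<And>N. sq_summable (x N)"
    and increments: "\<And>N. l2_norm (\<lambda>k. x (Suc N) k - x N k) \<le> C * r ^ N"
    and r: "0 \<le> r" "r < 1"
  obtains y where "sq_summable y" "(\<lambda>N. l2_norm (\<lambda>k. y k - x N k)) \<longlonglongrightarrow> 0"
proof (rule sq_summable_Cauchy_limit[OF x l2_norm_tail_le_geometric[OF x increments r]])
  have "(\<lambda>N. C * r ^ N / (1 - r)) \<longlonglongrightarrow> C * 0 / (1 - r)"
    using r by (intro tendsto_divide tendsto_mult tendsto_const LIMSEQ_power_zero) auto
  then show "(\<lambda>N. C * r ^ N / (1 - r)) \<longlonglongrightarrow> 0" by simp
qed

lemma sq_summable_iterate_limit: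
  fixes \<Phi> :: "('i \<Rightarrow> complex) \<Rightarrow> 'i \<Rightarrow> complex"
  assumes \<Phi>: "\<And>z. sq_summable z \<Longrightarrow> sq_summable (\<Phi> z)"
    and contraction: "\<And>z w. sq_summable z \<Longrightarrow> sq_summable w \<Longrightarrow>
      l2_norm (\<lambda>k. \<Phi> z k - \<Phi> w k) \<le> r * l2_norm (\<lambda>k. z k - w k)"
    and r: "0 \<le> r" "r < 1" and z0: "sq_summable z0"
  obtains y where "sq_summable y" "(\<lambda>N. l2_norm (\<lambda>k. y k - (\<Phi> ^^ N) z0 k)) \<longlonglongrightarrow> 0"
proof -
  define x where "x = (\<lambda>N. (\<Phi> ^^ N) z0)"
  have x: "sq_summable (x N)" for N
  proof (induction N)
    case 0 show ?case using z0 by (simp add: x_def)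
  next
    case (Suc N) then show ?case using \<Phi> by (simp add: x_def)
  qed
  define C where "C = l2_norm (\<lambda>k. x 1 k - x 0 k)"
  have increments: "l2_norm (\<lambda>k. x (Suc N) k - x N k) \<le> C * r ^ N" for N
  proof (induction N)
    case (Suc N)
    have "l2_norm (\<lambda>k. x (Suc (Suc N)) k - x (Suc N) k) \<le> r * l2_norm (\<lambda>k. x (Suc N) k - x N k)"
      using contraction[OF x[of "Suc N"] x[of N]] by (simp add: x_def)
    also have "\<dots> \<le> r * (C * r ^ N)" by (intro mult_left_mono Suc.IH r)
    finally show ?case by (simp add: algebra_simps)
  qed (simp add: C_def)
  obtain y where "sq_summable y" "(\<lambda>N. l2_norm (\<lambda>k. y k - x N k)) \<longlonglongrightarrow> 0"
    by (rule sq_summable_geometric_limit[of x, OF x increments r])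
  then show thesis by (intro that) (simp_all add: x_def)
qed

section \<open>Operators dominated by a convolution\<close>

lemma has_sum_sum:
  fixes f :: "'i \<Rightarrow> 'a \<Rightarrow> 'b::topological_comm_monoid_add"
  assumes "finite I" "\<And>i. i \<in> I \<Longrightarrow> (f i has_sum s i) A"
  shows "((\<lambda>x. \<Sum>i\<in>I. f i x) has_sum (\<Sum>i\<in>I. s i)) A"
  using assms by (induction I rule: finite_induct) (auto intro: has_sum_add)

definition kernel_op :: "('i \<Rightarrow> 'j \<Rightarrow> complex) \<Rightarrow> ('j \<Rightarrow> complex) \<Rightarrow> 'i \<Rightarrow> complex" where
  "kernel_op A x k = (\<Sum>\<^sub>\<infinity>j. A k j * x j)"

lemma kernel_op_conjugate:
  assumes "\<And>k. W k \<noteq> 0"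
  shows "kernel_op (\<lambda>k j. A k j * (W k / W j)) (\<lambda>j. W j * u j) k = W k * kernel_op A u k"
  unfolding kernel_op_def infsum_cmult_right'[symmetric]
  using assms by (intro infsum_cong) (simp add: field_simps)

locale convolution_dominated =
  fixes A :: "'i::ab_group_add \<Rightarrow> 'i \<Rightarrow> complex" and a :: "'i \<Rightarrow> real"
  assumes dominant_nonneg: "\<And>m. 0 \<le> a m"
    and dominant_summable: "a summable_on UNIV"
    and dominated: "\<And>k j. cmod (A k j) \<le> a (k - j)"
begin

definition mass :: real where
  "mass = (\<Sum>\<^sub>\<infinity>m. a m)"

lemma mass_nonneg: "0 \<le> mass"
  unfolding mass_def by (simp add: infsum_nonneg dominant_nonneg)

lemma le_mass: "a m \<le> mass"
  unfolding mass_def using finite_sum_le_infsum[OF dominant_summable, of "{m}"]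
  by (simp add: dominant_nonneg)

lemma has_sum_mass: "(a has_sum mass) UNIV"
  unfolding mass_def using dominant_summable by (simp add: summable_iff_has_sum_infsum)

lemma
  shows has_sum_mass_row: "((\<lambda>j. a (k - j)) has_sum mass) UNIV"
    and has_sum_mass_column: "((\<lambda>k. a (k - j)) has_sum mass) UNIV"
proof -
  have "bij_betw (\<lambda>j. k - j) UNIV UNIV"
    by (rule bij_betwI[where g="\<lambda>j. k - j"]) auto
  moreover have "bij_betw (\<lambda>k. k - j) UNIV UNIV"
    by (rule bij_betwI[where g="\<lambda>k. k + j"]) auto
  ultimately show "((\<lambda>j. a (k - j)) has_sum mass) UNIV" "((\<lambda>k. a (k - j)) has_sum mass) UNIV"
    using has_sum_reindex_bij_betw[of _ UNIV UNIV a mass] has_sum_mass by auto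
qed

context
  fixes x :: "'i \<Rightarrow> complex"
  assumes x: "sq_summable x"
begin

lemma weighted_sq_summable: "(\<lambda>j. a (k - j) * (cmod (x j))\<^sup>2) summable_on UNIV"
  using x unfolding sq_summable_def
  by (rule summable_on_comparison_test[OF summable_on_cmult_right[where c=mass]])
     (auto intro: mult_right_mono le_mass simp: dominant_nonneg)

lemma weighted_summable: "(\<lambda>j. a (k - j) * cmod (x j)) summable_on UNIV"
proof (rule summable_on_comparison_test)
  show "(\<lambda>j. a (k - j) + a (k - j) * (cmod (x j))\<^sup>2) summable_on UNIV"
    using has_sum_mass_row weighted_sq_summable by (intro summable_on_add) (auto simp: has_sum_iff)
  fix j
  have "cmod (x j) \<le> 1 + (cmod (x j))\<^sup>2"
    using zero_le_power2[of "cmod (x j) - 1"]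
    by (simp add: power2_diff) (use zero_le_power2[of "cmod (x j)"] in linarith)
  from mult_left_mono[OF this dominant_nonneg]
  show "a (k - j) * cmod (x j) \<le> a (k - j) + a (k - j) * (cmod (x j))\<^sup>2"
    by (simp add: distrib_left)
qed (simp add: dominant_nonneg)

lemma row_abs_summable: "(\<lambda>j. norm (A k j * x j)) summable_on UNIV"
  by (rule summable_on_comparison_test[OF weighted_summable])
     (auto simp: norm_mult intro: mult_right_mono dominated)

lemma row_summable: "(\<lambda>j. A k j * x j) summable_on UNIV"
  by (rule abs_summable_summable[OF row_abs_summable])

text \<open>Cauchy--Schwarz with respect to the weights \<open>a (k - j)\<close>.\<close>

lemma norm_kernel_op_sq:
  "(cmod (kernel_op A x k))\<^sup>2 \<le> mass * (\<Sum>\<^sub>\<infinity>j. a (k - j) * (cmod (x j))\<^sup>2)"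
proof -
  define T where "T = (\<Sum>\<^sub>\<infinity>j. a (k - j) * (cmod (x j))\<^sup>2)"
  have "(\<Sum>\<^sub>\<infinity>j. a (k - j) * cmod (x j)) \<le> sqrt (mass * T)"
  proof (rule infsum_le_finite_sums[OF weighted_summable])
    fix F :: "'i set" assume F: "finite F"
    have "(\<Sum>j\<in>F. a (k - j) * cmod (x j))\<^sup>2
        = (\<Sum>j\<in>F. sqrt (a (k - j)) * (sqrt (a (k - j)) * cmod (x j)))\<^sup>2"
      by (simp add: dominant_nonneg flip: mult.assoc)
    also have "\<dots> \<le> (\<Sum>j\<in>F. a (k - j)) * (\<Sum>j\<in>F. a (k - j) * (cmod (x j))\<^sup>2)"
      using Cauchy_Schwarz_ineq_sum[of "\<lambda>j. sqrt (a (k - j))" "\<lambda>j. sqrt (a (k - j)) * cmod (x j)" F]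
      by (simp add: dominant_nonneg power_mult_distrib)
    also have "\<dots> \<le> mass * T"
      unfolding T_def using F has_sum_mass_row weighted_sq_summable
      by (intro mult_mono finite_sum_le_has_sum finite_sum_le_infsum)
         (auto simp: dominant_nonneg mass_nonneg sum_nonneg)
    finally show "(\<Sum>j\<in>F. a (k - j) * cmod (x j)) \<le> sqrt (mass * T)"
      by (rule real_le_rsqrt)
  qed
  moreover have "cmod (kernel_op A x k) \<le> (\<Sum>\<^sub>\<infinity>j. a (k - j) * cmod (x j))"
  proof -
    have "cmod (kernel_op A x k) \<le> (\<Sum>\<^sub>\<infinity>j. cmod (A k j * x j))"
      unfolding kernel_op_def by (rule norm_infsum_bound[OF row_abs_summable])
    also have "\<dots> \<le> (\<Sum>\<^sub>\<infinity>j. a (k - j) * cmod (x j))"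
      by (intro infsum_mono row_abs_summable weighted_summable)
         (auto simp: norm_mult intro: mult_right_mono dominated)
    finally show ?thesis .
  qed
  ultimately have "cmod (kernel_op A x k) \<le> sqrt (mass * T)" by linarith
  then show ?thesis
    unfolding T_def by (intro sqrt_ge_absD) simp
qed

text \<open>Young's inequality \<open>\<parallel>a * x\<parallel>\<^sub>2 \<le> \<parallel>a\<parallel>\<^sub>1 \<parallel>x\<parallel>\<^sub>2\<close>, for kernels dominated by a convolution.\<close>

lemma
  shows kernel_op_sq_summable: "sq_summable (kernel_op A x)"
    and l2_norm_kernel_op_le: "l2_norm (kernel_op A x) \<le> mass * l2_norm x"
proof -
  have "L2_set (\<lambda>k. cmod (kernel_op A x k)) F \<le> mass * l2_norm x" if F: "finite F" for F
  proof -
    have col: "((\<lambda>j. \<Sum>k\<in>F. a (k - j) * (cmod (x j))\<^sup>2) has_sum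
        (\<Sum>k\<in>F. \<Sum>\<^sub>\<infinity>j. a (k - j) * (cmod (x j))\<^sup>2)) UNIV"
      using F weighted_sq_summable by (intro has_sum_sum) (auto simp: summable_iff_has_sum_infsum)
    have "(\<Sum>k\<in>F. (cmod (kernel_op A x k))\<^sup>2) \<le> mass * (\<Sum>k\<in>F. \<Sum>\<^sub>\<infinity>j. a (k - j) * (cmod (x j))\<^sup>2)"
      unfolding sum_distrib_left by (intro sum_mono norm_kernel_op_sq)
    also have "\<dots> \<le> mass * (\<Sum>\<^sub>\<infinity>j. mass * (cmod (x j))\<^sup>2)"
    proof (intro mult_left_mono mass_nonneg has_sum_mono[OF col])
      show "((\<lambda>j. mass * (cmod (x j))\<^sup>2) has_sum (\<Sum>\<^sub>\<infinity>j. mass * (cmod (x j))\<^sup>2)) UNIV"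
        using x unfolding sq_summable_def
        by (simp add: summable_iff_has_sum_infsum[symmetric] summable_on_cmult_right)
      show "(\<Sum>k\<in>F. a (k - j) * (cmod (x j))\<^sup>2) \<le> mass * (cmod (x j))\<^sup>2" for j
        using finite_sum_le_has_sum[OF has_sum_mass_column F]
        by (auto simp: sum_distrib_right[symmetric] dominant_nonneg intro!: mult_right_mono)
    qed
    also have "\<dots> = (mass * l2_norm x)\<^sup>2"
      unfolding power_mult_distrib power2_l2_norm infsum_cmult_right' by (simp add: power2_eq_square)
    finally have "(\<Sum>k\<in>F. (cmod (kernel_op A x k))\<^sup>2) \<le> (mass * l2_norm x)\<^sup>2" .
    then show ?thesis
      unfolding L2_set_def by (rule real_le_lsqrt[rotated]) (simp add: mass_nonneg l2_norm_nonneg)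
  qed
  then show "sq_summable (kernel_op A x)" "l2_norm (kernel_op A x) \<le> mass * l2_norm x"
    by (fact sq_summable_if_L2_set_bounded)+
qed

end

lemma kernel_op_diff:
  assumes "sq_summable x" "sq_summable y"
  shows "kernel_op A (\<lambda>j. x j - y j) k = kernel_op A x k - kernel_op A y k"
proof -
  have "((\<lambda>j. A k j * x j) has_sum kernel_op A x k) UNIV" "((\<lambda>j. A k j * y j) has_sum kernel_op A y k) UNIV"
    unfolding kernel_op_def using assms by (auto simp: summable_iff_has_sum_infsum[symmetric] row_summable)
  from has_sum_add[OF this(1) has_sum_uminusI[OF this(2)]]
  have "((\<lambda>j. A k j * (x j - y j)) has_sum (kernel_op A x k - kernel_op A y k)) UNIV"
    by (simp add: right_diff_distrib)
  then show ?thesis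
    unfolding kernel_op_def[of A "\<lambda>j. x j - y j"] by (rule infsumI)
qed

lemma l2_norm_kernel_op_diff_le:
  assumes "sq_summable x" "sq_summable y"
  shows "l2_norm (\<lambda>k. kernel_op A x k - kernel_op A y k) \<le> mass * l2_norm (\<lambda>k. x k - y k)"
  unfolding kernel_op_diff[OF assms, symmetric] by (rule l2_norm_kernel_op_le[OF sq_summable_diff[OF assms]])

lemma kernel_op_tendsto:
  assumes y: "sq_summable y" and x: "\<And>N. sq_summable (x N)"
    and lim: "(\<lambda>N. l2_norm (\<lambda>k. y k - x N k)) \<longlonglongrightarrow> 0"
  shows "(\<lambda>N. kernel_op A (x N) k) \<longlonglongrightarrow> kernel_op A y k"
proof (rule LIM_zero_cancel, rule Lim_null_comparison[OF always_eventually], rule allI)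
  fix N
  have "norm (kernel_op A (x N) k - kernel_op A y k) \<le> l2_norm (\<lambda>k. kernel_op A y k - kernel_op A (x N) k)"
    using norm_le_l2_norm[OF sq_summable_diff[OF kernel_op_sq_summable[OF y] kernel_op_sq_summable[OF x]]]
    by (simp add: norm_minus_commute)
  also have "\<dots> \<le> mass * l2_norm (\<lambda>k. y k - x N k)"
    by (rule l2_norm_kernel_op_diff_le[OF y x])
  finally show "norm (kernel_op A (x N) k - kernel_op A y k) \<le> mass * l2_norm (\<lambda>k. y k - x N k)" .
  show "(\<lambda>N. mass * l2_norm (\<lambda>k. y k - x N k)) \<longlonglongrightarrow> 0"
    using tendsto_mult_right_zero[OF lim] by simp
qed

text \<open>For \<open>\<bar>\<omega>\<bar>\<close> above the norm bound of the kernel operator, \<open>y \<mapsto> (kernel_op A y - g) / \<omega>\<close>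
  is a contraction; its fixed point is found by Picard iteration.\<close>

lemma resolvent_solution_exists:
  assumes \<omega>: "mass < cmod \<omega>" and g: "sq_summable g"
  obtains y where "sq_summable y" "\<And>k. kernel_op A y k - \<omega> * y k = g k"
proof -
  define r where "r = mass / cmod \<omega>"
  have "0 < cmod \<omega>" using \<omega> mass_nonneg by linarith
  then have r: "0 \<le> r" "r < 1" using \<omega> mass_nonneg unfolding r_def by (auto simp: field_simps)
  define \<Phi> where "\<Phi> = (\<lambda>z k. (kernel_op A z k - g k) / \<omega>)"
  have \<Phi>_sq_summable: "sq_summable (\<Phi> z)" if "sq_summable z" for z
    using sq_summable_cmult[OF sq_summable_diff[OF kernel_op_sq_summable[OF that] g], of "1 / \<omega>"]
    by (simp add: \<Phi>_def)
  have \<Phi>_contraction: "l2_norm (\<lambda>k. \<Phi> z k - \<Phi> w k) \<le> r * l2_norm (\<lambda>k. z k - w k)"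
    if z: "sq_summable z" and w: "sq_summable w" for z w
  proof -
    have "(\<lambda>k. \<Phi> z k - \<Phi> w k) = (\<lambda>k. (1 / \<omega>) * (kernel_op A z k - kernel_op A w k))"
      by (auto simp: \<Phi>_def diff_divide_distrib)
    then have "l2_norm (\<lambda>k. \<Phi> z k - \<Phi> w k)
        = cmod (1 / \<omega>) * l2_norm (\<lambda>k. kernel_op A z k - kernel_op A w k)"
      by (simp only: l2_norm_cmult[OF sq_summable_diff[OF kernel_op_sq_summable[OF z] kernel_op_sq_summable[OF w]]])
    also have "\<dots> = l2_norm (\<lambda>k. kernel_op A z k - kernel_op A w k) / cmod \<omega>"
      by (simp add: norm_divide)
    also have "\<dots> \<le> mass * l2_norm (\<lambda>j. z j - w j) / cmod \<omega>"
      by (intro divide_right_mono l2_norm_kernel_op_diff_le z w) simp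
    finally show ?thesis by (simp add: r_def)
  qed
  define x where "x = (\<lambda>N. (\<Phi> ^^ N) (\<lambda>k. - 1 / \<omega> * g k))"
  have x: "sq_summable (x N)" for N
  proof (induction N)
    case 0 show ?case using sq_summable_cmult[OF g, of "- 1 / \<omega>"] by (simp only: x_def funpow_0)
  next
    case (Suc N) then show ?case using \<Phi>_sq_summable by (simp add: x_def)
  qed
  have x_Suc: "x (Suc N) = \<Phi> (x N)" for N by (simp add: x_def)
  obtain y where y: "sq_summable y"
    and "(\<lambda>N. l2_norm (\<lambda>k. y k - (\<Phi> ^^ N) (\<lambda>k. - 1 / \<omega> * g k) k)) \<longlonglongrightarrow> 0"
    by (rule sq_summable_iterate_limit[OF \<Phi>_sq_summable \<Phi>_contraction r sq_summable_cmult[OF g]])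
  then have lim: "(\<lambda>N. l2_norm (\<lambda>k. y k - x N k)) \<longlonglongrightarrow> 0" by (simp add: x_def)
  have "y k = \<Phi> y k" for k
  proof (rule LIMSEQ_unique)
    show "(\<lambda>N. x (Suc N) k) \<longlonglongrightarrow> y k"
      using sq_summable_diff[OF y x] lim by (intro LIMSEQ_Suc l2_norm_tendsto_imp_pointwise)
    show "(\<lambda>N. x (Suc N) k) \<longlonglongrightarrow> \<Phi> y k"
      unfolding x_Suc \<Phi>_def using \<open>0 < cmod \<omega>\<close>
      by (intro tendsto_intros kernel_op_tendsto[OF y x lim]) auto
  qed
  then have "kernel_op A y k - \<omega> * y k = g k" for k
    using \<open>0 < cmod \<omega>\<close> by (simp add: \<Phi>_def field_simps)
  with y that show thesis by blast
qed

lemma resolvent_solution_unique: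
  assumes \<omega>: "mass < cmod \<omega>" and x: "sq_summable x" and y: "sq_summable y"
    and eq: "\<And>k. kernel_op A x k - \<omega> * x k = kernel_op A y k - \<omega> * y k"
  shows "x = y"
proof -
  define z where "z = (\<lambda>k. x k - y k)"
  have z: "sq_summable z" unfolding z_def using x y by (rule sq_summable_diff)
  have "kernel_op A z = (\<lambda>k. \<omega> * z k)"
  proof
    fix k
    have "kernel_op A z k = kernel_op A x k - kernel_op A y k"
      unfolding z_def by (rule kernel_op_diff[OF x y])
    also have "\<dots> = \<omega> * z k"
      using eq[of k] by (simp add: z_def field_simps)
    finally show "kernel_op A z k = \<omega> * z k" .
  qed
  then have "cmod \<omega> * l2_norm z \<le> mass * l2_norm z"
    using l2_norm_kernel_op_le[OF z] l2_norm_cmult[OF z, of \<omega>] by simp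
  have "l2_norm z \<le> 0"
  proof (rule ccontr)
    assume "\<not> l2_norm z \<le> 0"
    then have "mass * l2_norm z < cmod \<omega> * l2_norm z"
      using \<omega> by (intro mult_strict_right_mono) auto
    with \<open>cmod \<omega> * l2_norm z \<le> mass * l2_norm z\<close> show False by linarith
  qed
  then show "x = y"
    using l2_norm_le_zero_imp_zero[OF z] by (auto simp: z_def)
qed

end

text \<open>The solution is \<open>y / W\<close>, where \<open>y\<close> solves the conjugated equation in \<open>\<ell>\<^sup>2\<close>;
  uniqueness comes from the unconjugated equation.\<close>

theorem weighted_resolvent:
  assumes A: "convolution_dominated A a"
    and AW: "convolution_dominated (\<lambda>k j. A k j * (W k / W j)) a"
    and W: "\<And>k. 1 \<le> cmod (W k)"
    and \<omega>: "(\<Sum>\<^sub>\<infinity>m. a m) < cmod \<omega>"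
    and f: "sq_summable (\<lambda>k. W k * f k)"
  shows "\<exists>!u. sq_summable u \<and> (\<forall>k. kernel_op A u k - \<omega> * u k = f k)"
    and "\<forall>u. sq_summable u \<and> (\<forall>k. kernel_op A u k - \<omega> * u k = f k) \<longrightarrow> sq_summable (\<lambda>k. W k * u k)"
proof -
  have W0: "W k \<noteq> 0" for k using W[of k] by auto
  obtain y where y: "sq_summable y"
    and y_eq: "\<And>k. kernel_op (\<lambda>k j. A k j * (W k / W j)) y k - \<omega> * y k = W k * f k"
    using convolution_dominated.resolvent_solution_exists[OF AW _ f] \<omega>
    unfolding convolution_dominated.mass_def[OF AW] by blast
  define u where "u k = y k / W k" for k
  have y_u: "y = (\<lambda>k. W k * u k)" using W0 by (auto simp: u_def)
  have u: "sq_summable u"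
  proof (rule sq_summable_mono[OF y])
    fix k
    have "cmod (y k) \<le> cmod (y k) * cmod (W k)"
      using W[of k] by (simp add: mult_le_cancel_left1)
    then show "cmod (u k) \<le> cmod (y k)"
      using W0[of k] by (simp add: u_def norm_divide divide_le_eq)
  qed
  have u_eq: "\<forall>k. kernel_op A u k - \<omega> * u k = f k"
  proof
    fix k
    have "W k * (kernel_op A u k - \<omega> * u k) = W k * f k"
      using y_eq[of k] unfolding y_u kernel_op_conjugate[OF W0] by (simp add: algebra_simps)
    then show "kernel_op A u k - \<omega> * u k = f k" using W0 by simp
  qed
  have unique: "v = u" if "sq_summable v \<and> (\<forall>k. kernel_op A v k - \<omega> * v k = f k)" for v
    using convolution_dominated.resolvent_solution_unique[OF A _ _ u] that u_eq \<omega>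
    unfolding convolution_dominated.mass_def[OF A] by auto
  show "\<exists>!u. sq_summable u \<and> (\<forall>k. kernel_op A u k - \<omega> * u k = f k)"
    using u u_eq unique by blast
  show "\<forall>v. sq_summable v \<and> (\<forall>k. kernel_op A v k - \<omega> * v k = f k) \<longrightarrow> sq_summable (\<lambda>k. W k * v k)"
    using unique y y_u by auto
qed

section \<open>Holomorphic parameter integrals\<close>

lemma holomorphic_first_order_remainder:
  assumes holo: "f holomorphic_on S" and S: "open S" "cball w0 (2 * r) \<subseteq> S" and r: "0 < r"
    and B: "\<And>w. w \<in> S \<Longrightarrow> cmod (f w) \<le> B"
    and z: "z \<in> cball w0 r"
  shows "cmod (f z - f w0 - deriv f w0 * (z - w0)) \<le> 2 * B / r\<^sup>2 * (cmod (z - w0))\<^sup>2"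
proof -
  define K where "K = 2 * B / r\<^sup>2"
  have "w0 \<in> S" using S(2) r by auto
  then have "0 \<le> B" using B[of w0] norm_ge_zero order_trans by blast
  then have K: "0 \<le> K" unfolding K_def by simp
  have d1: "(f has_field_derivative deriv f v) (at v within T)" if "v \<in> S" for v T
    by (rule holomorphic_derivI[OF holo S(1) that])
  have d2: "(deriv f has_field_derivative deriv (deriv f) v) (at v within T)" if "v \<in> S" for v T
    by (rule holomorphic_derivI[OF holomorphic_deriv[OF holo S(1)] S(1) that])
  have second: "cmod (deriv (deriv f) v) \<le> K" if v: "v \<in> cball w0 r" for v
  proof -
    have "cball v r \<subseteq> cball w0 (2 * r)"
    proof
      fix u assume "u \<in> cball v r"
      moreover have "dist w0 u \<le> dist w0 v + dist v u" by (rule dist_triangle)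
      ultimately show "u \<in> cball w0 (2 * r)" using v by simp
    qed
    then have "cball v r \<subseteq> S" using S(2) by blast
    have "cmod ((deriv ^^ 2) f v) \<le> fact 2 * B / r ^ 2"
    proof (rule Cauchy_inequality[OF _ _ r])
      show "f holomorphic_on ball v r"
        using holo \<open>cball v r \<subseteq> S\<close> ball_subset_cball by (meson holomorphic_on_subset order_trans)
      show "continuous_on (cball v r) f"
        using holomorphic_on_imp_continuous_on[OF holo] \<open>cball v r \<subseteq> S\<close> by (rule continuous_on_subset)
      show "cmod (f u) \<le> B" if "cmod (v - u) = r" for u
        using B that \<open>cball v r \<subseteq> S\<close> by (auto simp: dist_norm subset_eq)
    qed
    then show ?thesis by (simp add: K_def numeral_2_eq_2)
  qed
  have "cball w0 r \<subseteq> S" using S(2) r by (intro order_trans[OF _ S(2)]) auto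
  then have first: "cmod (deriv f v - deriv f w0) \<le> K * cmod (v - w0)" if "v \<in> cball w0 r" for v
    using that r by (intro field_differentiable_bound[OF convex_cball d2 second]) auto
  have "cmod ((f z - deriv f w0 * z) - (f w0 - deriv f w0 * w0)) \<le> (K * cmod (z - w0)) * cmod (z - w0)"
  proof (rule field_differentiable_bound[OF convex_closed_segment])
    fix v assume v: "v \<in> closed_segment w0 z"
    have "closed_segment w0 z \<subseteq> cball w0 r" using z r by (intro closed_segment_subset) auto
    with v \<open>cball w0 r \<subseteq> S\<close> have "v \<in> cball w0 r" "v \<in> S" by auto
    show "((\<lambda>v. f v - deriv f w0 * v) has_field_derivative deriv f v - deriv f w0) (at v within closed_segment w0 z)"
      by (rule derivative_eq_intros d1[OF \<open>v \<in> S\<close>] | simp)+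
    have "cmod (v - w0) \<le> cmod (z - w0)"
      using dist_in_closed_segment[OF v] by (simp add: dist_norm norm_minus_commute)
    then show "cmod (deriv f v - deriv f w0) \<le> K * cmod (z - w0)"
      using first[OF \<open>v \<in> cball w0 r\<close>] K by (meson mult_left_mono order_trans)
  qed auto
  then show ?thesis by (simp add: K_def algebra_simps power2_eq_square)
qed

text \<open>\<open>D\<close> is the uniform limit of the difference quotients \<open>(\<psi> x (w0 + t) - \<psi> x w0) / t\<close>.\<close>

lemma integrable_on_uniform_remainder_derivative:
  fixes \<psi> :: "'x::euclidean_space \<Rightarrow> complex \<Rightarrow> complex"
  assumes int: "\<And>w. w \<in> cball w0 r \<Longrightarrow> (\<lambda>x. \<psi> x w) integrable_on cbox lo hi"
    and r: "0 < r" and K: "0 \<le> K"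
    and remainder: "\<And>x z. x \<in> cbox lo hi \<Longrightarrow> z \<in> cball w0 r \<Longrightarrow>
      cmod (\<psi> x z - \<psi> x w0 - D x * (z - w0)) \<le> K * (cmod (z - w0))\<^sup>2"
  shows "D integrable_on cbox lo hi"
proof (rule integrable_uniform_limit)
  fix \<epsilon> :: real assume \<epsilon>: "\<epsilon> > 0"
  define t where "t = min r (\<epsilon> / (K + 1))"
  have t: "0 < t" "t \<le> r" "K * t \<le> \<epsilon>"
    using r \<epsilon> K by (auto simp: t_def min_def field_simps intro: order_trans[OF mult_left_mono[of _ "\<epsilon> / (K + 1)"]])
  have w: "w0 + of_real t \<in> cball w0 r" "w0 \<in> cball w0 r" using t by (simp_all add: dist_norm)
  define q where "q x = (\<psi> x (w0 + of_real t) - \<psi> x w0) / of_real t" for x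
  have "q integrable_on cbox lo hi"
    unfolding q_def by (intro integrable_diff integrable_on_divide int w)
  moreover have "norm (D x - q x) \<le> \<epsilon>" if x: "x \<in> cbox lo hi" for x
  proof -
    have "norm (D x - q x) = cmod (\<psi> x (w0 + of_real t) - \<psi> x w0 - D x * (w0 + of_real t - w0)) / t"
      using t by (simp add: q_def field_simps norm_divide norm_minus_commute)
    also have "\<dots> \<le> K * t\<^sup>2 / t"
      using remainder[OF x w(1)] t by (intro divide_right_mono) auto
    finally show ?thesis using t by (simp add: power2_eq_square)
  qed
  ultimately show "\<exists>q. (\<forall>x\<in>cbox lo hi. norm (D x - q x) \<le> \<epsilon>) \<and> q integrable_on cbox lo hi" by blast
qed

lemma has_field_derivative_integral_uniform_remainder:
  fixes \<psi> :: "'x::euclidean_space \<Rightarrow> complex \<Rightarrow> complex"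
  assumes int: "\<And>w. w \<in> cball w0 r \<Longrightarrow> (\<lambda>x. \<psi> x w) integrable_on cbox lo hi"
    and r: "0 < r" and K: "0 \<le> K"
    and remainder: "\<And>x z. x \<in> cbox lo hi \<Longrightarrow> z \<in> cball w0 r \<Longrightarrow>
      cmod (\<psi> x z - \<psi> x w0 - D x * (z - w0)) \<le> K * (cmod (z - w0))\<^sup>2"
  shows "((\<lambda>w. integral (cbox lo hi) (\<lambda>x. \<psi> x w)) has_field_derivative integral (cbox lo hi) D) (at w0)"
proof -
  define I where "I w = integral (cbox lo hi) (\<lambda>x. \<psi> x w)" for w
  define c where "c = Henstock_Kurzweil_Integration.content (cbox lo hi)"
  have w0: "w0 \<in> cball w0 r" using r by simp
  have D: "D integrable_on cbox lo hi"
    using assms by (rule integrable_on_uniform_remainder_derivative)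
  have quotient: "cmod ((I z - I w0) / (z - w0) - integral (cbox lo hi) D) \<le> K * c * cmod (z - w0)"
    if z: "z \<in> cball w0 r" "z \<noteq> w0" for z
  proof -
    have "((\<lambda>x. \<psi> x z - \<psi> x w0 - D x * (z - w0)) has_integral
        (I z - I w0 - integral (cbox lo hi) D * (z - w0))) (cbox lo hi)"
      unfolding I_def by (intro has_integral_diff has_integral_mult_left integrable_integral int z w0 D)
    then have "cmod (I z - I w0 - integral (cbox lo hi) D * (z - w0)) \<le> K * (cmod (z - w0))\<^sup>2 * c"
      unfolding c_def by (rule has_integral_bound[rotated]) (use K remainder z in auto)
    then show ?thesis
      using z by (simp add: norm_divide divide_le_eq power2_eq_square field_simps)
  qed
  have "(I has_field_derivative integral (cbox lo hi) D) (at w0)"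
    unfolding has_field_derivative_iff
  proof (rule LIM_zero_cancel, rule Lim_null_comparison)
    show "\<forall>\<^sub>F z in at w0. norm ((I z - I w0) / (z - w0) - integral (cbox lo hi) D) \<le> K * c * cmod (z - w0)"
      unfolding eventually_at using r quotient by (auto simp: dist_norm norm_minus_commute intro!: exI[of _ r])
    show "((\<lambda>z. K * c * cmod (z - w0)) \<longlongrightarrow> 0) (at w0)"
      by (intro tendsto_mult_right_zero tendsto_norm_zero LIM_zero tendsto_ident_at)
  qed
  then show ?thesis unfolding I_def .
qed

lemma holomorphic_on_integral_parameter:
  fixes \<psi> :: "'x::euclidean_space \<Rightarrow> complex \<Rightarrow> complex"
  assumes S: "open S"
    and holo: "\<And>x. x \<in> cbox lo hi \<Longrightarrow> \<psi> x holomorphic_on S"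
    and bound: "\<And>x w. x \<in> cbox lo hi \<Longrightarrow> w \<in> S \<Longrightarrow> cmod (\<psi> x w) \<le> B"
    and int: "\<And>w. w \<in> S \<Longrightarrow> (\<lambda>x. \<psi> x w) integrable_on cbox lo hi"
  shows "(\<lambda>w. integral (cbox lo hi) (\<lambda>x. \<psi> x w)) holomorphic_on S"
  unfolding holomorphic_on_def
proof
  fix w0 assume "w0 \<in> S"
  then obtain e where "0 < e" "cball w0 e \<subseteq> S"
    using S open_contains_cball by blast
  then obtain r where r: "0 < r" "cball w0 (2 * r) \<subseteq> S"
    by (intro that[of "e / 2"]) auto
  have "cball w0 r \<subseteq> S" using r by (intro order_trans[OF _ r(2)]) auto
  have "((\<lambda>w. integral (cbox lo hi) (\<lambda>x. \<psi> x w)) has_field_derivative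
      integral (cbox lo hi) (\<lambda>x. deriv (\<psi> x) w0)) (at w0)"
  proof (rule has_field_derivative_integral_uniform_remainder[where K="2 * max B 0 / r\<^sup>2"])
    show "\<And>x z. x \<in> cbox lo hi \<Longrightarrow> z \<in> cball w0 r \<Longrightarrow>
        cmod (\<psi> x z - \<psi> x w0 - deriv (\<psi> x) w0 * (z - w0)) \<le> 2 * max B 0 / r\<^sup>2 * (cmod (z - w0))\<^sup>2"
      using holo bound r S by (intro holomorphic_first_order_remainder) (auto intro: max.coboundedI1)
  qed (use r int \<open>cball w0 r \<subseteq> S\<close> in auto)
  then show "(\<lambda>w. integral (cbox lo hi) (\<lambda>x. \<psi> x w)) field_differentiable at w0 within S"
    using field_differentiable_at_within field_differentiable_def by blast
qed

section \<open>Periodic integrals and holomorphic functions on a strip\<close>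

lemma has_integral_translate:
  fixes f :: "'a::euclidean_space \<Rightarrow> 'b::real_normed_vector"
  shows "(f has_integral i) (cbox a b) \<Longrightarrow> ((\<lambda>x. f (x + c)) has_integral i) (cbox (a - c) (b - c))"
  using has_integral_affinity'[of f i a b 1 c] by simp

lemma cbox_cart_cut_le:
  assumes "c \<le> T"
  shows "cbox 0 (\<chi> l. T) \<inter> {x::real^'n::finite. x $ i \<le> c} = cbox 0 (\<chi> l. if l = i then c else T)"
  using assms by (auto simp: mem_box_cart split: if_splits) (metis order_trans)

lemma cbox_cart_cut_ge:
  assumes "0 \<le> c"
  shows "cbox 0 (\<chi> l. T) \<inter> {x::real^'n::finite. c \<le> x $ i} = cbox (\<chi> l. if l = i then c else 0) (\<chi> l. T)"
  using assms by (auto simp: mem_box_cart split: if_splits) (metis order_trans)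

text \<open>Cut the cube at \<open>x\<^sub>i = T - s\<close>; the two pieces, moved by \<open>s\<close> and by \<open>s - T\<close>,
  are the two halves of the cube cut at \<open>x\<^sub>i = s\<close>.\<close>

lemma integral_translate_periodic:
  fixes F :: "real ^ 'n::finite \<Rightarrow> 'b::banach"
  assumes cont: "continuous_on UNIV F"
    and periodic: "\<And>y. F (y + T *\<^sub>R axis i 1) = F y"
    and s: "0 \<le> s" "s \<le> T"
  shows "integral (cbox 0 (\<chi> l. T)) (\<lambda>x. F (x + s *\<^sub>R axis i 1)) = integral (cbox 0 (\<chi> l. T)) F"
proof -
  define e :: "real ^ 'n" where "e = axis i 1"
  have e: "e \<in> Basis" "\<And>x. x \<bullet> e = x $ i" unfolding e_def by (simp_all add: inner_axis)
  have e_nth: "e $ l = (if l = i then 1 else 0)" for l unfolding e_def by (simp add: axis_def)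
  define B1 :: "(real ^ 'n) set" where "B1 = cbox (\<chi> l. if l = i then s else 0) (\<chi> l. T)"
  define B2 :: "(real ^ 'n) set" where "B2 = cbox 0 (\<chi> l. if l = i then s else T)"
  have int: "(F has_integral integral (cbox u v) F) (cbox u v)" for u v
    using cont by (intro integrable_integral integrable_continuous continuous_on_subset[OF cont]) auto
  have corners:
    "(\<chi> l. if l = i then s else 0) - s *\<^sub>R e = 0"
    "(\<chi> l. T) - s *\<^sub>R e = (\<chi> l. if l = i then T - s else T)"
    "0 - (s - T) *\<^sub>R e = (\<chi> l. if l = i then T - s else 0)"
    "(\<chi> l. if l = i then s else T) - (s - T) *\<^sub>R e = (\<chi> l. T)"
    by (auto simp: vec_eq_iff e_nth)
  have shift: "F (x + (s - T) *\<^sub>R e) = F (x + s *\<^sub>R e)" for x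
    using periodic[of "x + (s - T) *\<^sub>R e"] by (simp add: e_def algebra_simps)
  have "((\<lambda>x. F (x + s *\<^sub>R e)) has_integral (integral B1 F + integral B2 F)) (cbox 0 (\<chi> l. T))"
  proof (rule has_integral_split[OF _ _ e(1), where c="T - s"])
    have "T - s \<le> T" using s by simp
    then show "((\<lambda>x. F (x + s *\<^sub>R e)) has_integral integral B1 F) (cbox 0 (\<chi> l. T) \<inter> {x. x \<bullet> e \<le> T - s})"
      using has_integral_translate[OF int[of "\<chi> l. if l = i then s else 0" "\<chi> l. T"], of "s *\<^sub>R e"]
      unfolding e(2) B1_def corners by (simp add: cbox_cart_cut_le)
    have "0 \<le> T - s" using s by simp
    then show "((\<lambda>x. F (x + s *\<^sub>R e)) has_integral integral B2 F) (cbox 0 (\<chi> l. T) \<inter> {x. T - s \<le> x \<bullet> e})"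
      using has_integral_translate[OF int[of 0 "\<chi> l. if l = i then s else T"], of "(s - T) *\<^sub>R e"]
      unfolding e(2) B2_def corners shift by (simp add: cbox_cart_cut_ge)
  qed
  moreover have "(F has_integral (integral B2 F + integral B1 F)) (cbox 0 (\<chi> l. T))"
  proof (rule has_integral_split[OF _ _ e(1), where c=s])
    show "(F has_integral integral B2 F) (cbox 0 (\<chi> l. T) \<inter> {x. x \<bullet> e \<le> s})"
      unfolding e(2) cbox_cart_cut_le[OF s(2)] B2_def by (rule int)
    show "(F has_integral integral B1 F) (cbox 0 (\<chi> l. T) \<inter> {x. s \<le> x \<bullet> e})"
      unfolding e(2) cbox_cart_cut_ge[OF s(1)] B1_def by (rule int)
  qed
  ultimately show ?thesis
    unfolding e_def by (metis add.commute integral_unique)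
qed

lemma open_Im_strip: "open {w::complex. \<bar>Im w\<bar> < c}"
  by (rule open_Collect_less) (auto intro!: continuous_intros)

lemma connected_Im_strip: "connected {w::complex. \<bar>Im w\<bar> < c}"
proof -
  have "{w::complex. \<bar>Im w\<bar> < c} = {w. Im w < c} \<inter> {w. Im w > - c}" by auto
  then show ?thesis
    by (metis convex_connected convex_Int convex_halfspace_Im_lt convex_halfspace_Im_gt)
qed

lemma holomorphic_strip_eq_on_interval:
  assumes holo: "G holomorphic_on {w. \<bar>Im w\<bar> < a}" and a: "0 < a" and T: "0 < T"
    and real: "\<And>s. 0 \<le> s \<Longrightarrow> s \<le> T \<Longrightarrow> G (of_real s) = G 0"
    and w: "\<bar>Im w\<bar> < a"
  shows "G w = G 0"
proof -
  define S where "S = {w::complex. \<bar>Im w\<bar> < a}"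
  have "eventually (\<lambda>y. complex_of_real y \<noteq> of_real (T / 2)) (at (T / 2))"
    unfolding of_real_eq_iff eventually_at_filter by simp
  then have limpt: "of_real (T / 2) islimpt (of_real ` {0..T} :: complex set)"
    using T by (intro islimpt_isCont_image) auto
  have in_S: "of_real ` {0..T} \<subseteq> S" "of_real (T / 2) \<in> S" "w \<in> S"
    using a T w by (auto simp: S_def)
  have "(\<lambda>w. G w - G 0) holomorphic_on S"
    unfolding S_def by (rule holomorphic_on_diff[OF holo holomorphic_on_const])
  from analytic_continuation[OF this open_Im_strip[of a, folded S_def] connected_Im_strip[of a, folded S_def]
      in_S(1,2) limpt _ in_S(3)]
  have "G w - G 0 = 0" using real by force
  then show ?thesis by simp
qed

section \<open>Holomorphy along coordinate lines\<close>

lemma norm_axis: "norm (axis i c :: 'a::real_normed_vector ^ 'n::finite) = norm c"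
proof -
  have "(\<Sum>l\<in>UNIV. (norm (axis i c $ l))\<^sup>2) = (norm c)\<^sup>2"
    by (simp add: axis_def if_distrib[of "\<lambda>z. (norm z)\<^sup>2"] cong: if_cong)
  then show ?thesis unfolding norm_vec_def L2_set_def by simp
qed

lemma bounded_linear_axis: "bounded_linear (axis i :: 'a::real_normed_vector \<Rightarrow> 'a ^ 'n::finite)"
proof (rule bounded_linear_intro[where K=1])
  show "norm (axis i x :: 'a ^ 'n) \<le> norm x * 1" for x by (simp add: norm_axis)
qed (simp_all add: axis_def vec_eq_iff)

lemma holo2_continuous_at: "holo2 p U \<Longrightarrow> w \<in> U \<Longrightarrow> isCont (\<lambda>(z, \<zeta>). p z \<zeta>) w"
  unfolding holo2_def by (blast intro: has_derivative_continuous)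

text \<open>Along the line the derivative is \<open>\<eta> \<mapsto> \<eta> D(e\<^sub>i, 0)\<close>, by real linearity and
  \<open>\<i>\<close>-homogeneity of the derivative \<open>D\<close> of \<open>p\<close>.\<close>

lemma holo2_holomorphic_on_axis_line:
  assumes holo: "holo2 p U" and line: "\<And>w. w \<in> S \<Longrightarrow> (z0 + axis i w, \<zeta>0) \<in> U"
  shows "(\<lambda>w. p (z0 + axis i w) \<zeta>0) holomorphic_on S"
  unfolding holomorphic_on_def
proof
  fix w assume "w \<in> S"
  then obtain D where D: "((\<lambda>(z, \<zeta>). p z \<zeta>) has_derivative D) (at (z0 + axis i w, \<zeta>0))"
    and D_hom: "\<And>h1 h2. D (\<i> *s h1, \<i> *s h2) = \<i> * D (h1, h2)"
    using holo line unfolding holo2_def by blast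
  have lin: "linear D" using has_derivative_linear[OF D] .
  have "((\<lambda>w. (z0 + axis i w, \<zeta>0)) has_derivative (\<lambda>\<eta>. (axis i \<eta>, 0))) (at w)"
    using bounded_linear_imp_has_derivative[OF bounded_linear_axis, of i]
    by (auto intro!: derivative_eq_intros)
  from diff_chain_at[OF this D]
  have chain: "((\<lambda>w. p (z0 + axis i w) \<zeta>0) has_derivative (\<lambda>\<eta>. D (axis i \<eta>, 0))) (at w)"
    by (simp add: o_def)
  define d where "d = D (axis i 1, 0)"
  have "D (axis i \<eta>, 0) = d * \<eta>" for \<eta>
  proof -
    have split: "(axis i \<eta>, 0 :: complex ^ 'n) = Re \<eta> *\<^sub>R (axis i 1, 0) + Im \<eta> *\<^sub>R (\<i> *s axis i 1, \<i> *s 0)"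
      by (auto simp: vec_eq_iff axis_def complex_eq_iff)
    have "D (axis i \<eta>, 0) = Re \<eta> *\<^sub>R d + Im \<eta> *\<^sub>R (\<i> * d)"
      unfolding split by (simp only: linear_add[OF lin] linear_scale[OF lin] D_hom d_def)
    also have "\<dots> = d * \<eta>"
      by (simp add: scaleR_conv_of_real algebra_simps complex_eq_iff)
    finally show ?thesis .
  qed
  with chain have "((\<lambda>w. p (z0 + axis i w) \<zeta>0) has_field_derivative d) (at w)"
    by (simp add: has_field_derivative_def)
  then show "(\<lambda>w. p (z0 + axis i w) \<zeta>0) field_differentiable at w within S"
    using field_differentiable_at_within field_differentiable_def by blast
qed

section \<open>Exponential weights on the integer lattice\<close>

lemma summable_on_exp_neg_abs_int:
  assumes c: "0 < c"
  shows "(\<lambda>r::int. exp (- c * \<bar>real_of_int r\<bar>)) summable_on UNIV"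
proof -
  have nat: "(\<lambda>n::nat. exp (- c * real n)) summable_on UNIV"
  proof -
    have "summable (\<lambda>n::nat. exp (- c) ^ n)" using c by (intro summable_geometric) auto
    then show ?thesis
      by (simp add: summable_on_UNIV_nonneg_real_iff exp_of_nat_mult[symmetric] mult.commute)
  qed
  have "inj (int :: nat \<Rightarrow> int)" "inj (\<lambda>n::nat. - int n - 1)" by (auto intro: injI)
  moreover have "exp (- c * \<bar>real_of_int (- int n - 1)\<bar>) \<le> exp (- c * real n)" for n
    using c by simp
  ultimately have "(\<lambda>r::int. exp (- c * \<bar>real_of_int r\<bar>)) summable_on range int"
      "(\<lambda>r::int. exp (- c * \<bar>real_of_int r\<bar>)) summable_on range (\<lambda>n::nat. - int n - 1)"
    using nat by (simp_all add: summable_on_reindex o_def summable_on_comparison_test[OF nat])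
  then have "(\<lambda>r::int. exp (- c * \<bar>real_of_int r\<bar>)) summable_on (range int \<union> range (\<lambda>n::nat. - int n - 1))"
    by (rule summable_on_Un_disjoint) auto
  moreover have "range int \<union> range (\<lambda>n::nat. - int n - 1) = UNIV"
  proof -
    have "r \<in> range int \<union> range (\<lambda>n::nat. - int n - 1)" for r :: int
    proof (cases "r \<ge> 0")
      case True then show ?thesis by (auto intro!: image_eqI[where x="nat r"])
    next
      case False then show ?thesis by (auto intro!: image_eqI[where x="nat (- r - 1)"])
    qed
    then show ?thesis by auto
  qed
  ultimately show ?thesis by simp
qed

lemma summable_on_prod_vec:
  fixes g :: "int \<Rightarrow> real"
  assumes g: "\<And>r. 0 \<le> g r" "g summable_on UNIV"
  shows "(\<lambda>m::int ^ 'n::finite. \<Prod>i\<in>UNIV. g (m $ i)) summable_on UNIV"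
proof -
  have "Infinite_Set_Sum.abs_summable_on g UNIV"
    using abs_summable_equivalent[of g UNIV] g by simp
  then have "Infinite_Set_Sum.abs_summable_on (\<lambda>f. \<Prod>x\<in>(UNIV::'n set). g (f x)) (PiE UNIV (\<lambda>_. UNIV))"
    by (intro abs_summable_on_prod_PiE) auto
  then have prod: "(\<lambda>f. \<Prod>x\<in>(UNIV::'n set). g (f x)) summable_on (PiE UNIV (\<lambda>_. UNIV))"
    using g(1) by (simp add: abs_summable_equivalent[symmetric] prod_nonneg)
  have inj: "inj (vec_nth :: int ^ 'n \<Rightarrow> 'n \<Rightarrow> int)" by (rule injI) (simp add: vec_nth_inject)
  have "range (vec_nth :: int ^ 'n \<Rightarrow> 'n \<Rightarrow> int) = PiE UNIV (\<lambda>_. UNIV)"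
    by (auto simp: PiE_UNIV_domain intro!: image_eqI[where x="vec_lambda _"])
  then show ?thesis
    using summable_on_reindex[OF inj, of "\<lambda>f. \<Prod>x\<in>UNIV. g (f x)"] prod by (simp add: o_def)
qed

definition l1norm :: "int ^ 'n::finite \<Rightarrow> real" where
  "l1norm m = (\<Sum>i\<in>UNIV. \<bar>real_of_int (m $ i)\<bar>)"

lemma lnorm_eq_norm_ivec: "lnorm k = norm (ivec k)"
  by (simp add: lnorm_def norm_vec_def L2_set_def ivec_def)

lemma lnorm_nonneg: "0 \<le> lnorm k"
  by (simp add: lnorm_eq_norm_ivec)

lemma lnorm_le_l1norm: "lnorm m \<le> l1norm m"
  using L2_set_le_sum_abs[of "\<lambda>i. real_of_int (m $ i)" UNIV] unfolding lnorm_def l1norm_def L2_set_def .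

lemma lnorm_triangle: "lnorm k \<le> lnorm (k - j) + lnorm j"
proof -
  have "ivec (k - j) = ivec k - ivec j" by (simp add: ivec_def vec_eq_iff)
  then show ?thesis
    unfolding lnorm_eq_norm_ivec using norm_triangle_sub[of "ivec k" "ivec j"] by (simp add: add.commute)
qed

lemma l1norm_le_max_coordinate:
  fixes m :: "int ^ 'n::finite"
  obtains i where "l1norm m \<le> real CARD('n) * \<bar>real_of_int (m $ i)\<bar>"
proof -
  define M where "M = Max (range (\<lambda>l. \<bar>real_of_int (m $ l)\<bar>))"
  have "M \<in> range (\<lambda>l. \<bar>real_of_int (m $ l)\<bar>)"
    unfolding M_def by (rule Max_in) auto
  then obtain i where i: "M = \<bar>real_of_int (m $ i)\<bar>" by blast
  have "l1norm m \<le> real CARD('n) * M"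
    unfolding l1norm_def M_def by (rule sum_bounded_above) simp
  with i show thesis by (intro that[of i]) simp
qed

lemma exp_neg_l1norm: "exp (- c * l1norm m) = (\<Prod>i\<in>UNIV. exp (- c * \<bar>real_of_int (m $ i)\<bar>))"
proof -
  have "- c * l1norm m = (\<Sum>i\<in>UNIV. - c * \<bar>real_of_int (m $ i)\<bar>)"
    unfolding l1norm_def by (rule sum_distrib_left)
  then show ?thesis by (simp only: exp_sum finite)
qed

lemma summable_on_exp_neg_l1norm:
  "0 < c \<Longrightarrow> (\<lambda>m::int ^ 'n::finite. exp (- c * l1norm m)) summable_on UNIV"
  unfolding exp_neg_l1norm by (intro summable_on_prod_vec summable_on_exp_neg_abs_int) auto

lemma Adelta_iff_weighted:
  "Adelta \<delta> u \<longleftrightarrow> sq_summable u \<and> sq_summable (\<lambda>k. of_real (exp (2 * \<delta> * lnorm k)) * u k)"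
proof -
  have "(cmod (of_real (exp (2 * \<delta> * lnorm k)) * u k))\<^sup>2 = (cmod (u k))\<^sup>2 * exp (4 * lnorm k * \<delta>)" for k
    by (simp add: norm_mult power_mult_distrib power2_eq_square exp_add[symmetric] algebra_simps)
  then show ?thesis
    by (simp add: Adelta_def L2T_def sq_summable_def)
qed

section \<open>The resolvent of an analytic symbol\<close>

lemma axis_zero [simp]: "axis i 0 = (0 :: 'a::zero ^ 'n::finite)"
  by (simp add: axis_def vec_eq_iff)

lemma L2T_iff_sq_summable: "L2T u \<longleftrightarrow> sq_summable u"
  unfolding L2T_def sq_summable_def ..

lemma opP_eq_kernel_op: "opP p u = kernel_op (\<lambda>k j. symc p (k - j) j) u"
  unfolding opP_def kernel_op_def ..

lemma content_tcube: "Henstock_Kurzweil_Integration.content (tcube :: (real ^ 'n::finite) set) = (2 * pi) ^ CARD('n)"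
proof -
  have "(0 :: real ^ 'n) \<in> tcube" by (simp add: tcube_def mem_box_cart)
  then show ?thesis
    unfolding tcube_def by (subst content_cbox_cart) auto
qed

locale analytic_symbol =
  fixes p :: "complex ^ 'n::finite \<Rightarrow> complex ^ 'n \<Rightarrow> complex"
    and a b C0 :: real and U :: "((complex ^ 'n) \<times> (complex ^ 'n)) set"
  assumes a_pos: "0 < a" and b_pos: "0 < b"
    and region: "symb_region a b \<subseteq> U" and holo: "holo2 p U"
    and bound: "\<And>z \<zeta>. (z, \<zeta>) \<in> symb_region a b \<Longrightarrow> cmod (p z \<zeta>) \<le> C0"
    and periodic: "\<And>(x :: real ^ 'n) (\<xi> :: real ^ 'n) (k :: int ^ 'n).
        p (cvec (x + (2 * pi) *\<^sub>R ivec k)) (cvec \<xi>) = p (cvec x) (cvec \<xi>)"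
begin

lemma axis_line_in_region: "\<bar>Im w\<bar> \<le> a \<Longrightarrow> (cvec x + axis i w, cvec \<xi>) \<in> symb_region a b"
proof -
  assume "\<bar>Im w\<bar> \<le> a"
  moreover have "vIm (cvec x + axis i w) = axis i (Im w)" "vIm (cvec \<xi>) = 0"
    by (auto simp: vIm_def cvec_def axis_def vec_eq_iff)
  moreover have "0 \<le> b * jbr (vRe (cvec \<xi>))"
    using b_pos by (simp add: jbr_def)
  ultimately show ?thesis by (simp add: symb_region_def norm_axis)
qed

lemma C0_nonneg: "0 \<le> C0"
proof -
  have "\<bar>Im 0\<bar> \<le> a" using a_pos by simp
  from bound[OF axis_line_in_region[OF this]] show ?thesis
    using norm_ge_zero order_trans by blast
qed

lemma axis_line_holomorphic: "(\<lambda>w. p (cvec x + axis i w) (cvec \<xi>)) holomorphic_on {w. \<bar>Im w\<bar> < a}"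
proof (rule holo2_holomorphic_on_axis_line[OF holo])
  fix w :: complex assume "w \<in> {w. \<bar>Im w\<bar> < a}"
  then show "(cvec x + axis i w, cvec \<xi>) \<in> U"
    using axis_line_in_region[of w x i \<xi>] region by auto
qed

lemma axis_line_continuous:
  assumes "\<bar>Im w\<bar> \<le> a"
  shows "continuous_on UNIV (\<lambda>x. p (cvec x + axis i w) (cvec \<xi>))"
proof -
  have "isCont (\<lambda>(z, \<zeta>). p z \<zeta>) (cvec x + axis i w, cvec \<xi>)" for x
    using axis_line_in_region[OF assms, of x i \<xi>] region by (intro holo2_continuous_at[OF holo]) auto
  moreover have "continuous_on UNIV (cvec :: real ^ 'n \<Rightarrow> complex ^ 'n)"
    unfolding cvec_def by (intro continuous_intros continuous_on_vec_lambda)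
  then have "isCont (\<lambda>x. (cvec x + axis i w, cvec \<xi>)) x" for x :: "real ^ 'n"
    by (intro continuous_intros) (simp add: continuous_on_eq_continuous_at)
  ultimately show ?thesis
    using continuous_at_compose[where f="\<lambda>x. (cvec x + axis i w, cvec \<xi>)" and g="\<lambda>(z, \<zeta>). p z \<zeta>"]
    by (simp add: continuous_on_eq_continuous_at o_def)
qed

text \<open>The integral defining \<open>symc p m j\<close>, with \<open>x\<^sub>i\<close> shifted by a complex \<open>w\<close>.\<close>

definition shifted_integrand :: "int ^ 'n \<Rightarrow> int ^ 'n \<Rightarrow> 'n \<Rightarrow> real ^ 'n \<Rightarrow> complex \<Rightarrow> complex" where
  "shifted_integrand m j i x w =
     exp (- \<i> * (of_real (ivec m \<bullet> x) + of_int (m $ i) * w)) * p (cvec x + axis i w) (cvec (ivec j))"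

definition shifted_coeff :: "int ^ 'n \<Rightarrow> int ^ 'n \<Rightarrow> 'n \<Rightarrow> complex \<Rightarrow> complex" where
  "shifted_coeff m j i w = integral tcube (\<lambda>x. shifted_integrand m j i x w)"

lemma norm_shifted_integrand_le:
  "\<bar>Im w\<bar> \<le> a \<Longrightarrow> cmod (shifted_integrand m j i x w) \<le> exp (of_int (m $ i) * Im w) * C0"
  unfolding shifted_integrand_def using bound[OF axis_line_in_region]
  by (simp add: norm_mult mult_left_mono)

lemma continuous_on_shifted_integrand:
  "\<bar>Im w\<bar> \<le> a \<Longrightarrow> continuous_on UNIV (\<lambda>x. shifted_integrand m j i x w)"
  unfolding shifted_integrand_def using axis_line_continuous by (intro continuous_intros) auto

lemma integrable_shifted_integrand:
  "\<bar>Im w\<bar> \<le> a \<Longrightarrow> (\<lambda>x. shifted_integrand m j i x w) integrable_on tcube"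
  unfolding tcube_def by (intro integrable_continuous continuous_on_subset[OF continuous_on_shifted_integrand]) auto

lemma shifted_coeff_holomorphic: "shifted_coeff m j i holomorphic_on {w. \<bar>Im w\<bar> < a}"
  unfolding shifted_coeff_def[abs_def] tcube_def
proof (rule holomorphic_on_integral_parameter[where B="exp (\<bar>real_of_int (m $ i)\<bar> * a) * C0"])
  show "shifted_integrand m j i x holomorphic_on {w. \<bar>Im w\<bar> < a}" for x
    unfolding shifted_integrand_def[abs_def] by (intro holomorphic_intros axis_line_holomorphic)
  show "cmod (shifted_integrand m j i x w) \<le> exp (\<bar>real_of_int (m $ i)\<bar> * a) * C0"
    if "w \<in> {w. \<bar>Im w\<bar> < a}" for x w
  proof -
    have "of_int (m $ i) * Im w \<le> \<bar>real_of_int (m $ i)\<bar> * \<bar>Im w\<bar>" by (metis abs_ge_self abs_mult)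
    also have "\<dots> \<le> \<bar>real_of_int (m $ i)\<bar> * a" using that by (intro mult_left_mono) auto
    finally have "exp (of_int (m $ i) * Im w) * C0 \<le> exp (\<bar>real_of_int (m $ i)\<bar> * a) * C0"
      using C0_nonneg by (intro mult_right_mono) auto
    then show ?thesis using norm_shifted_integrand_le[of w m j i x] that by auto
  qed
  show "(\<lambda>x. shifted_integrand m j i x w) integrable_on cbox 0 (\<chi> l. 2 * pi)"
    if "w \<in> {w. \<bar>Im w\<bar> < a}" for w
    using integrable_shifted_integrand[of w] that unfolding tcube_def by auto
qed (rule open_Im_strip)

text \<open>A real shift \<open>s\<close> translates the periodic integrand by \<open>s e\<^sub>i\<close>.\<close>

lemma shifted_coeff_real:
  assumes s: "0 \<le> s" "s \<le> 2 * pi"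
  shows "shifted_coeff m j i (of_real s) = shifted_coeff m j i 0"
proof -
  define F where "F y = shifted_integrand m j i y 0" for y
  have inner_shift: "ivec m \<bullet> (y + t *\<^sub>R axis i 1) = ivec m \<bullet> y + t * of_int (m $ i)" for y t
    by (simp add: inner_add_right inner_axis ivec_def)
  have translate: "shifted_integrand m j i x (of_real t) = F (x + t *\<^sub>R axis i 1)" for x t
  proof -
    have "cvec (x + t *\<^sub>R axis i 1) = cvec x + axis i (of_real t)"
      by (simp add: cvec_def axis_def vec_eq_iff)
    then show ?thesis unfolding shifted_integrand_def F_def inner_shift by (simp add: mult.commute)
  qed
  have "continuous_on UNIV F"
    unfolding F_def using a_pos by (intro continuous_on_shifted_integrand) simp
  moreover have "F (y + (2 * pi) *\<^sub>R axis i 1) = F y" for y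
  proof -
    have "(2 * pi) *\<^sub>R ivec (axis i 1 :: int ^ 'n) = (2 * pi) *\<^sub>R axis i 1"
      by (simp add: ivec_def axis_def vec_eq_iff)
    then have "p (cvec (y + (2 * pi) *\<^sub>R axis i 1)) (cvec (ivec j)) = p (cvec y) (cvec (ivec j))"
      using periodic[of y "axis i 1"] by simp
    moreover have "exp (- \<i> * of_real (ivec m \<bullet> (y + (2 * pi) *\<^sub>R axis i 1)))
        = exp (- \<i> * of_real (ivec m \<bullet> y)) * exp (- \<i> * of_real (2 * pi * of_int (m $ i)))"
      unfolding inner_shift by (simp add: exp_add[symmetric] algebra_simps)
    moreover have "exp (- \<i> * of_real (2 * pi * of_int (m $ i))) = 1"
      using exp_integer_2pi[of "- of_int (m $ i)"] by (simp add: algebra_simps)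
    ultimately show ?thesis
      unfolding F_def shifted_integrand_def by simp
  qed
  ultimately have "integral tcube (\<lambda>x. F (x + s *\<^sub>R axis i 1)) = integral tcube F"
    unfolding tcube_def by (intro integral_translate_periodic s)
  then show ?thesis
    unfolding shifted_coeff_def translate using translate[of _ 0] by simp
qed

lemma symc_eq_shifted_coeff: "symc p m j = of_real (1 / (2 * pi) ^ CARD('n)) * shifted_coeff m j i 0"
  unfolding symc_def shifted_coeff_def shifted_integrand_def by simp

text \<open>By analytic continuation \<open>shifted_coeff m j i\<close> is constant on the strip; at
  \<open>Im w = \<mp>a/2\<close> the exponential factor has modulus \<open>exp (- a \<bar>m\<^sub>i\<bar> / 2)\<close>.\<close>

lemma symc_decay_axis: "cmod (symc p m j) \<le> C0 * exp (- (a / 2) * \<bar>real_of_int (m $ i)\<bar>)"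
proof -
  define \<sigma> :: real where "\<sigma> = (if m $ i \<ge> 0 then 1 else -1)"
  define w where "w = - \<i> * of_real (\<sigma> * a / 2)"
  have Im_w: "Im w = - (\<sigma> * a / 2)" by (simp add: w_def)
  have "\<bar>Im w\<bar> = a / 2"
    unfolding Im_w \<sigma>_def using a_pos by simp
  then have w: "\<bar>Im w\<bar> \<le> a" "\<bar>Im w\<bar> < a"
    using a_pos by linarith+
  have decay: "of_int (m $ i) * Im w = - (a / 2) * \<bar>real_of_int (m $ i)\<bar>"
    unfolding Im_w \<sigma>_def by simp
  have "0 < 2 * pi" by simp
  from holomorphic_strip_eq_on_interval[OF shifted_coeff_holomorphic a_pos this shifted_coeff_real w(2)]
  have continuation: "shifted_coeff m j i w = shifted_coeff m j i 0" .
  have bound_w: "cmod (shifted_coeff m j i w)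
      \<le> exp (- (a / 2) * \<bar>real_of_int (m $ i)\<bar>) * C0 * (2 * pi) ^ CARD('n)"
    unfolding shifted_coeff_def content_tcube[symmetric] tcube_def
    using norm_shifted_integrand_le[OF w(1), of m j i] C0_nonneg integrable_shifted_integrand[OF w(1), of m j i]
    unfolding decay tcube_def by (intro has_integral_bound[OF _ integrable_integral]) auto
  have "cmod (symc p m j) = cmod (shifted_coeff m j i w) / (2 * pi) ^ CARD('n)"
    by (simp add: symc_eq_shifted_coeff[of m j i] norm_divide norm_mult norm_power continuation)
  also have "\<dots> \<le> exp (- (a / 2) * \<bar>real_of_int (m $ i)\<bar>) * C0 * (2 * pi) ^ CARD('n) / (2 * pi) ^ CARD('n)"
    by (rule divide_right_mono[OF bound_w]) simp
  finally show ?thesis by (simp add: mult.commute)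
qed

lemma symc_decay: "cmod (symc p m j) \<le> C0 * exp (- (a / (2 * real CARD('n))) * l1norm m)"
proof -
  obtain i where i: "l1norm m \<le> real CARD('n) * \<bar>real_of_int (m $ i)\<bar>"
    by (rule l1norm_le_max_coordinate)
  have "a / (2 * real CARD('n)) * l1norm m \<le> a / (2 * real CARD('n)) * (real CARD('n) * \<bar>real_of_int (m $ i)\<bar>)"
    using a_pos by (intro mult_left_mono[OF i]) auto
  then have "exp (- (a / 2) * \<bar>real_of_int (m $ i)\<bar>) \<le> exp (- (a / (2 * real CARD('n))) * l1norm m)"
    by simp
  with symc_decay_axis[of m j i] C0_nonneg show ?thesis
    by (meson mult_left_mono order_trans)
qed

text \<open>With \<open>c = a / (4 n)\<close> the coefficients decay like \<open>exp (- 2 c \<bar>m\<bar>\<^sub>1)\<close>; conjugation by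
  \<open>exp (t \<bar>k\<bar>)\<close>, \<open>t \<le> c\<close>, costs at most \<open>exp (c \<bar>k - j\<bar>\<^sub>1)\<close>, leaving a summable bound.\<close>

lemma symc_conjugate_dominated:
  assumes t: "0 \<le> t" "t \<le> a / (4 * real CARD('n))"
  shows "convolution_dominated
    (\<lambda>k j. symc p (k - j) j * (of_real (exp (t * lnorm k)) / of_real (exp (t * lnorm j))))
    (\<lambda>m. C0 * exp (- (a / (4 * real CARD('n))) * l1norm m))"
proof
  define c where "c = a / (4 * real CARD('n))"
  have c: "0 < c" using a_pos by (simp add: c_def)
  show "0 \<le> C0 * exp (- c * l1norm m)" for m using C0_nonneg by simp
  show "(\<lambda>m. C0 * exp (- c * l1norm m)) summable_on UNIV"
    using summable_on_exp_neg_l1norm[OF c] by (rule summable_on_cmult_right)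
  fix k j :: "int ^ 'n"
  have "exp (t * lnorm k) / exp (t * lnorm j) \<le> exp (c * l1norm (k - j))"
  proof -
    have "t * (lnorm k - lnorm j) \<le> t * lnorm (k - j)"
      using lnorm_triangle[of k j] t(1) by (intro mult_left_mono) auto
    also have "\<dots> \<le> c * l1norm (k - j)"
      using t lnorm_le_l1norm[of "k - j"] lnorm_nonneg[of "k - j"] by (intro mult_mono) (auto simp: c_def)
    finally show ?thesis by (simp add: exp_diff[symmetric] algebra_simps)
  qed
  moreover have "cmod (symc p (k - j) j) \<le> C0 * exp (- (2 * c) * l1norm (k - j))"
    using symc_decay[of "k - j" j] by (simp add: c_def)
  ultimately have "cmod (symc p (k - j) j) * (exp (t * lnorm k) / exp (t * lnorm j))
      \<le> C0 * exp (- (2 * c) * l1norm (k - j)) * exp (c * l1norm (k - j))"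
    using C0_nonneg by (intro mult_mono) auto
  also have "\<dots> = C0 * exp (- c * l1norm (k - j))"
    by (simp add: mult.assoc exp_add[symmetric] algebra_simps)
  finally show "cmod (symc p (k - j) j * (of_real (exp (t * lnorm k)) / of_real (exp (t * lnorm j))))
      \<le> C0 * exp (- c * l1norm (k - j))"
    by (simp add: norm_mult norm_divide)
qed

theorem resolvent_preserves_Adelta:
  "\<exists>C>0. \<exists>\<delta>>0. \<forall>\<omega>. Im \<omega> \<ge> C \<longrightarrow>
     (\<forall>f. Adelta \<delta> f \<longrightarrow>
        (\<exists>!u. L2T u \<and> (\<forall>k. opP p u k - \<omega> * u k = f k)) \<and>
        (\<forall>u. L2T u \<and> (\<forall>k. opP p u k - \<omega> * u k = f k) \<longrightarrow> Adelta \<delta> u))"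
proof (intro exI conjI allI impI)
  define c where "c = a / (4 * real CARD('n))"
  define M where "M = (\<Sum>\<^sub>\<infinity>m :: int ^ 'n. C0 * exp (- c * l1norm m))"
  define W :: "int ^ 'n \<Rightarrow> complex" where "W k = of_real (exp (c * lnorm k))" for k
  have dominated: "convolution_dominated (\<lambda>k j. symc p (k - j) j) (\<lambda>m. C0 * exp (- c * l1norm m))"
    using symc_conjugate_dominated[of 0] a_pos by (simp add: c_def)
  have conj_dominated:
    "convolution_dominated (\<lambda>k j. symc p (k - j) j * (W k / W j)) (\<lambda>m. C0 * exp (- c * l1norm m))"
    using symc_conjugate_dominated[of c] a_pos by (simp add: c_def W_def)
  have W: "1 \<le> cmod (W k)" for k
    using a_pos lnorm_nonneg[of k] by (simp add: W_def c_def)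
  have "0 \<le> M"
    unfolding M_def using C0_nonneg by (simp add: infsum_nonneg)
  then show "0 < M + 1" by simp
  show "0 < c / 2" using a_pos by (simp add: c_def)
  fix \<omega> :: complex and f :: "int ^ 'n \<Rightarrow> complex"
  assume "M + 1 \<le> Im \<omega>" "Adelta (c / 2) f"
  then have \<omega>: "M < cmod \<omega>" and f: "sq_summable (\<lambda>k. W k * f k)"
    using abs_Im_le_cmod[of \<omega>] by (auto simp: Adelta_iff_weighted W_def)
  note resolvent = weighted_resolvent[OF dominated conj_dominated W \<omega>[unfolded M_def] f]
  show "\<exists>!u. L2T u \<and> (\<forall>k. opP p u k - \<omega> * u k = f k)"
    using resolvent(1) by (simp add: L2T_iff_sq_summable opP_eq_kernel_op)
  show "Adelta (c / 2) u" if "L2T u \<and> (\<forall>k. opP p u k - \<omega> * u k = f k)" for u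
    using resolvent(2) that by (simp add: L2T_iff_sq_summable opP_eq_kernel_op Adelta_iff_weighted W_def)
qed

end

theorem lemmaB5:
  fixes p :: "complex ^ 'n::finite \<Rightarrow> complex ^ 'n \<Rightarrow> complex"
    and a b C0 :: real and U :: "((complex ^ 'n) \<times> (complex ^ 'n)) set"
  assumes ab: "a > 0" "b > 0"
    and U: "symb_region a b \<subseteq> U" "holo2 p U"
    and bound: "\<And>z \<zeta>. (z, \<zeta>) \<in> symb_region a b \<Longrightarrow> cmod (p z \<zeta>) \<le> C0"
    and periodic: "\<And>(x :: real ^ 'n) (\<xi> :: real ^ 'n) (k :: int ^ 'n).
        p (cvec (x + (2 * pi) *\<^sub>R ivec k)) (cvec \<xi>) = p (cvec x) (cvec \<xi>)"
    and sa: "selfadjP p"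
  shows "\<exists>C>0. \<exists>\<delta>>0. \<forall>\<omega>. Im \<omega> \<ge> C \<longrightarrow>
           (\<forall>f. Adelta \<delta> f \<longrightarrow>
              (\<exists>!u. L2T u \<and> (\<forall>k. opP p u k - \<omega> * u k = f k)) \<and>
              (\<forall>u. L2T u \<and> (\<forall>k. opP p u k - \<omega> * u k = f k) \<longrightarrow> Adelta \<delta> u))"
proof -
  interpret analytic_symbol p a b C0 U
    using ab U bound periodic by unfold_locales auto
  show ?thesis by (rule resolvent_preserves_Adelta)
qed

end
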